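(* Let $\mathcal{D}$ be a dagger category equipped with a conservative dagger functor $F\colon\mathcal{D}\to\mathrm{Hilb}$. Suppose that every positive endomorphism $f\colon c\to c$ in $\mathcal{D}$ is end-positive. Then $\mathcal{D}$ is minimal.
   Context: A dagger category is a category with an identity-on-objects functor $\dagger$ to its opposite with $f^{\dagger\dagger}=f$; a dagger functor satisfies $F(f^\dagger)=F(f)^\dagger$. $\mathrm{Hilb}$ is the dagger category of finite-dimensional complex Hilbert spaces with adjoints. An endomorphism $f\colon c\to c$ is positive if $f=g^\dagger g$ for some morphism $g\colon c\to c'$, and end-positive if $f=g^\dagger g$ for some endomorphism $g\colon c\to c$. A functor is conservative if it reflects isomorphisms. $\mathcal{D}$ is minimal if the map $\pi_0^U(\mathcal{D})\to\pi_0(\mathcal{D})$ from unitary-isomorphism classes of objects ($u$ unitary iff $u^\dagger=u^{-1}$) to isomorphism classes is bijective. *)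

theory Defs
  imports "Jordan_Normal_Form.Schur_Decomposition"
begin

text \<open>A (small, set-carried) category together with a candidate dagger operation.
  Composition convention: Comp g f is "g after f", defined when Cod f = Dom g.\<close>

record ('o, 'm) dcat =
  Obj  :: "'o set"
  Arr  :: "'m set"
  Dom  :: "'m \<Rightarrow> 'o"
  Cod  :: "'m \<Rightarrow> 'o"
  Idm  :: "'o \<Rightarrow> 'm"
  Comp :: "'m \<Rightarrow> 'm \<Rightarrow> 'm"
  Dag  :: "'m \<Rightarrow> 'm"

definition is_category :: "('o, 'm) dcat \<Rightarrow> bool" where
  "is_category C \<longleftrightarrow>
     (\<forall>f\<in>Arr C. Dom C f \<in> Obj C \<and> Cod C f \<in> Obj C) \<and>
     (\<forall>a\<in>Obj C. Idm C a \<in> Arr C \<and> Dom C (Idm C a) = a \<and> Cod C (Idm C a) = a) \<and>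
     (\<forall>f\<in>Arr C. \<forall>g\<in>Arr C. Cod C f = Dom C g \<longrightarrow>
         Comp C g f \<in> Arr C \<and> Dom C (Comp C g f) = Dom C f \<and> Cod C (Comp C g f) = Cod C g) \<and>
     (\<forall>f\<in>Arr C. Comp C f (Idm C (Dom C f)) = f \<and> Comp C (Idm C (Cod C f)) f = f) \<and>
     (\<forall>f\<in>Arr C. \<forall>g\<in>Arr C. \<forall>h\<in>Arr C. Cod C f = Dom C g \<longrightarrow> Cod C g = Dom C h \<longrightarrow>
         Comp C h (Comp C g f) = Comp C (Comp C h g) f)"

definition is_dagger_category :: "('o, 'm) dcat \<Rightarrow> bool" where
  "is_dagger_category C \<longleftrightarrow> is_category C \<and>
     (\<forall>f\<in>Arr C. Dag C f \<in> Arr C \<and> Dom C (Dag C f) = Cod C f \<and> Cod C (Dag C f) = Dom C f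
                 \<and> Dag C (Dag C f) = f) \<and>
     (\<forall>a\<in>Obj C. Dag C (Idm C a) = Idm C a) \<and>
     (\<forall>f\<in>Arr C. \<forall>g\<in>Arr C. Cod C f = Dom C g \<longrightarrow>
         Dag C (Comp C g f) = Comp C (Dag C f) (Dag C g))"

text \<open>Hilb: finite-dimensional complex Hilbert spaces, modelled by the spaces C^n
  (object n :: nat) with linear maps C^m \<rightarrow> C^n given by n \<times> m complex matrices,
  and dagger the conjugate transpose (adjoint).\<close>
definition Hilb :: "(nat, complex mat) dcat" where
  "Hilb = \<lparr> Obj = UNIV, Arr = UNIV, Dom = dim_col, Cod = dim_row,
            Idm = (\<lambda>n. 1\<^sub>m n), Comp = (\<lambda>g f. g * f), Dag = mat_adjoint \<rparr>"

definition is_iso :: "('o, 'm) dcat \<Rightarrow> 'm \<Rightarrow> bool" where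
  "is_iso C f \<longleftrightarrow> f \<in> Arr C \<and> (\<exists>g\<in>Arr C. Dom C g = Cod C f \<and> Cod C g = Dom C f \<and>
      Comp C g f = Idm C (Dom C f) \<and> Comp C f g = Idm C (Cod C f))"

definition is_unitary :: "('o, 'm) dcat \<Rightarrow> 'm \<Rightarrow> bool" where
  "is_unitary C u \<longleftrightarrow> u \<in> Arr C \<and>
      Comp C (Dag C u) u = Idm C (Dom C u) \<and> Comp C u (Dag C u) = Idm C (Cod C u)"

definition isomorphic :: "('o, 'm) dcat \<Rightarrow> 'o \<Rightarrow> 'o \<Rightarrow> bool" where
  "isomorphic C a b \<longleftrightarrow> (\<exists>f. is_iso C f \<and> Dom C f = a \<and> Cod C f = b)"

definition unitarily_isomorphic :: "('o, 'm) dcat \<Rightarrow> 'o \<Rightarrow> 'o \<Rightarrow> bool" where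
  "unitarily_isomorphic C a b \<longleftrightarrow> (\<exists>u. is_unitary C u \<and> Dom C u = a \<and> Cod C u = b)"

definition functor_on :: "('o, 'm) dcat \<Rightarrow> ('p, 'n) dcat \<Rightarrow> ('o \<Rightarrow> 'p) \<Rightarrow> ('m \<Rightarrow> 'n) \<Rightarrow> bool" where
  "functor_on C D Fo Fm \<longleftrightarrow>
     (\<forall>a\<in>Obj C. Fo a \<in> Obj D) \<and>
     (\<forall>f\<in>Arr C. Fm f \<in> Arr D \<and> Dom D (Fm f) = Fo (Dom C f) \<and> Cod D (Fm f) = Fo (Cod C f)) \<and>
     (\<forall>a\<in>Obj C. Fm (Idm C a) = Idm D (Fo a)) \<and>
     (\<forall>f\<in>Arr C. \<forall>g\<in>Arr C. Cod C f = Dom C g \<longrightarrow> Fm (Comp C g f) = Comp D (Fm g) (Fm f))"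

definition dagger_functor :: "('o, 'm) dcat \<Rightarrow> ('p, 'n) dcat \<Rightarrow> ('o \<Rightarrow> 'p) \<Rightarrow> ('m \<Rightarrow> 'n) \<Rightarrow> bool" where
  "dagger_functor C D Fo Fm \<longleftrightarrow> functor_on C D Fo Fm \<and>
     (\<forall>f\<in>Arr C. Fm (Dag C f) = Dag D (Fm f))"

definition conservative :: "('o, 'm) dcat \<Rightarrow> ('p, 'n) dcat \<Rightarrow> ('m \<Rightarrow> 'n) \<Rightarrow> bool" where
  "conservative C D Fm \<longleftrightarrow> (\<forall>f\<in>Arr C. is_iso D (Fm f) \<longrightarrow> is_iso C f)"

definition positive :: "('o, 'm) dcat \<Rightarrow> 'm \<Rightarrow> bool" where
  "positive C f \<longleftrightarrow> (\<exists>g\<in>Arr C. Dom C g = Dom C f \<and> f = Comp C (Dag C g) g)"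

definition end_positive :: "('o, 'm) dcat \<Rightarrow> 'm \<Rightarrow> bool" where
  "end_positive C f \<longleftrightarrow> (\<exists>g\<in>Arr C. Dom C g = Dom C f \<and> Cod C g = Dom C f \<and>
      f = Comp C (Dag C g) g)"

definition iso_classes :: "('o, 'm) dcat \<Rightarrow> 'o set set" where
  "iso_classes C = Obj C // {(a, b). a \<in> Obj C \<and> b \<in> Obj C \<and> isomorphic C a b}"

definition unitary_classes :: "('o, 'm) dcat \<Rightarrow> 'o set set" where
  "unitary_classes C = Obj C // {(a, b). a \<in> Obj C \<and> b \<in> Obj C \<and> unitarily_isomorphic C a b}"

text \<open>The canonical map \<pi>_0^U(C) \<rightarrow> \<pi>_0(C): send a unitary class to the iso class containing it.\<close>
definition class_map :: "('o, 'm) dcat \<Rightarrow> 'o set \<Rightarrow> 'o set" where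
  "class_map C X = {b \<in> Obj C. \<exists>a\<in>X. isomorphic C a b}"

definition minimal :: "('o, 'm) dcat \<Rightarrow> bool" where
  "minimal C \<longleftrightarrow> bij_betw (class_map C) (unitary_classes C) (iso_classes C)"

end

theory Submission
  imports Defs
begin

text \<open>Let \<open>f : a \<rightarrow> b\<close> be an isomorphism. The positive endomorphism \<open>f\<^sup>\<dagger> f\<close> is end-positive,
  say \<open>f\<^sup>\<dagger> f = h\<^sup>\<dagger> h\<close> with \<open>h : a \<rightarrow> a\<close>. Since \<open>F (h\<^sup>\<dagger> h)\<close> is invertible, the square matrix
  \<open>F h\<close> has a left inverse and is therefore invertible, so \<open>h\<close> is an isomorphism by
  conservativity. Then \<open>u = f h\<inverse>\<close> is unitary, because
  \<open>u\<^sup>\<dagger> u = (h\<inverse>)\<^sup>\<dagger> h\<^sup>\<dagger> h h\<inverse> = 1\<close>. Hence isomorphic objects are unitarily isomorphic,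
  the two equivalence relations on objects coincide, and the map from unitary classes to
  isomorphism classes is the identity.\<close>

locale dagger_category =
  fixes C :: "('o, 'm) dcat"
  assumes is_dagger_category: "is_dagger_category C"
begin

lemma dom_in_Obj [simp]: "f \<in> Arr C \<Longrightarrow> Dom C f \<in> Obj C"
  and cod_in_Obj [simp]: "f \<in> Arr C \<Longrightarrow> Cod C f \<in> Obj C"
  and Idm_in_Arr [simp]: "a \<in> Obj C \<Longrightarrow> Idm C a \<in> Arr C"
  and dom_Idm [simp]: "a \<in> Obj C \<Longrightarrow> Dom C (Idm C a) = a"
  and cod_Idm [simp]: "a \<in> Obj C \<Longrightarrow> Cod C (Idm C a) = a"
  and Comp_in_Arr [simp]: "f \<in> Arr C \<Longrightarrow> g \<in> Arr C \<Longrightarrow> Cod C f = Dom C g \<Longrightarrow> Comp C g f \<in> Arr C"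
  and dom_Comp [simp]:
    "f \<in> Arr C \<Longrightarrow> g \<in> Arr C \<Longrightarrow> Cod C f = Dom C g \<Longrightarrow> Dom C (Comp C g f) = Dom C f"
  and cod_Comp [simp]:
    "f \<in> Arr C \<Longrightarrow> g \<in> Arr C \<Longrightarrow> Cod C f = Dom C g \<Longrightarrow> Cod C (Comp C g f) = Cod C g"
  and Comp_Idm_right [simp]: "f \<in> Arr C \<Longrightarrow> Dom C f = a \<Longrightarrow> Comp C f (Idm C a) = f"
  and Comp_Idm_left [simp]: "f \<in> Arr C \<Longrightarrow> Cod C f = a \<Longrightarrow> Comp C (Idm C a) f = f"
  and Comp_assoc: "f \<in> Arr C \<Longrightarrow> g \<in> Arr C \<Longrightarrow> h \<in> Arr C \<Longrightarrow> Cod C f = Dom C g \<Longrightarrow>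
    Cod C g = Dom C h \<Longrightarrow> Comp C h (Comp C g f) = Comp C (Comp C h g) f"
  using is_dagger_category unfolding is_dagger_category_def is_category_def by blast+

lemma Dag_in_Arr [simp]: "f \<in> Arr C \<Longrightarrow> Dag C f \<in> Arr C"
  and dom_Dag [simp]: "f \<in> Arr C \<Longrightarrow> Dom C (Dag C f) = Cod C f"
  and cod_Dag [simp]: "f \<in> Arr C \<Longrightarrow> Cod C (Dag C f) = Dom C f"
  and Dag_Idm [simp]: "a \<in> Obj C \<Longrightarrow> Dag C (Idm C a) = Idm C a"
  and Dag_Comp: "f \<in> Arr C \<Longrightarrow> g \<in> Arr C \<Longrightarrow> Cod C f = Dom C g \<Longrightarrow>
    Dag C (Comp C g f) = Comp C (Dag C f) (Dag C g)"
  using is_dagger_category unfolding is_dagger_category_def by blast+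

lemma isoE:
  assumes "is_iso C f"
  obtains g where "f \<in> Arr C" "g \<in> Arr C" "Dom C g = Cod C f" "Cod C g = Dom C f"
    "Comp C g f = Idm C (Dom C f)" "Comp C f g = Idm C (Cod C f)"
  using assms unfolding is_iso_def by blast

lemma iso_Idm: "a \<in> Obj C \<Longrightarrow> is_iso C (Idm C a)"
  unfolding is_iso_def by (auto intro!: bexI[of _ "Idm C a"])

lemma iso_Comp:
  assumes "is_iso C f" "is_iso C g" and fg: "Cod C f = Dom C g"
  shows "is_iso C (Comp C g f)"
proof -
  obtain f' where f': "f \<in> Arr C" "f' \<in> Arr C" "Dom C f' = Cod C f" "Cod C f' = Dom C f"
    and f'_inv: "Comp C f' f = Idm C (Dom C f)" "Comp C f f' = Idm C (Cod C f)"
    using assms(1) by (rule isoE)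
  obtain g' where g': "g \<in> Arr C" "g' \<in> Arr C" "Dom C g' = Cod C g" "Cod C g' = Dom C g"
    and g'_inv: "Comp C g' g = Idm C (Dom C g)" "Comp C g g' = Idm C (Cod C g)"
    using assms(2) by (rule isoE)
  have "Comp C (Comp C f' g') (Comp C g f) = Comp C f' (Comp C (Comp C g' g) f)"
    using f' g' fg by (simp add: Comp_assoc)
  also have "\<dots> = Idm C (Dom C f)"
    using f' g' fg f'_inv g'_inv by simp
  finally have left: "Comp C (Comp C f' g') (Comp C g f) = Idm C (Dom C f)" .
  have "Comp C (Comp C g f) (Comp C f' g') = Comp C g (Comp C (Comp C f f') g')"
    using f' g' fg by (simp add: Comp_assoc)
  also have "\<dots> = Idm C (Cod C g)"
    using f' g' fg f'_inv g'_inv by simp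
  finally have right: "Comp C (Comp C g f) (Comp C f' g') = Idm C (Cod C g)" .
  show ?thesis
    unfolding is_iso_def using f' g' fg left right
    by (auto intro!: bexI[of _ "Comp C f' g'"])
qed

lemma iso_Dag:
  assumes "is_iso C f"
  shows "is_iso C (Dag C f)"
proof -
  obtain g where g: "f \<in> Arr C" "g \<in> Arr C" "Dom C g = Cod C f" "Cod C g = Dom C f"
    "Comp C g f = Idm C (Dom C f)" "Comp C f g = Idm C (Cod C f)"
    using assms by (rule isoE)
  show ?thesis
    unfolding is_iso_def using g Dag_Comp[of g f] Dag_Comp[of f g]
    by (auto intro!: bexI[of _ "Dag C g"])
qed

lemma unitary_imp_iso: "is_unitary C u \<Longrightarrow> is_iso C u"
  unfolding is_unitary_def is_iso_def by (auto intro!: bexI[of _ "Dag C u"])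

lemma unitaryI:
  assumes "is_iso C u" and unitary: "Comp C (Dag C u) u = Idm C (Dom C u)"
  shows "is_unitary C u"
proof -
  obtain v where v: "u \<in> Arr C" "v \<in> Arr C" "Dom C v = Cod C u" "Cod C v = Dom C u"
    and v_inv: "Comp C v u = Idm C (Dom C u)" "Comp C u v = Idm C (Cod C u)"
    using assms(1) by (rule isoE)
  have "Dag C u = Comp C (Dag C u) (Comp C u v)"
    using v v_inv by simp
  also have "\<dots> = Comp C (Comp C (Dag C u) u) v"
    using v by (simp add: Comp_assoc)
  also have "\<dots> = v"
    using v unitary by (metis Comp_Idm_left)
  finally show ?thesis
    unfolding is_unitary_def using v v_inv unitary by simp
qed

lemma isomorphic_refl: "a \<in> Obj C \<Longrightarrow> isomorphic C a a"
  unfolding isomorphic_def using iso_Idm by fastforce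

lemma isomorphic_trans: "isomorphic C a b \<Longrightarrow> isomorphic C b c \<Longrightarrow> isomorphic C a c"
  unfolding isomorphic_def by (metis isoE iso_Comp dom_Comp cod_Comp)

lemma unitarily_isomorphic_imp_isomorphic:
  "unitarily_isomorphic C a b \<Longrightarrow> isomorphic C a b"
  unfolding unitarily_isomorphic_def isomorphic_def using unitary_imp_iso by blast

text \<open>The unitary factor \<open>f h\<inverse>\<close> of the polar decomposition \<open>f = u h\<close>.\<close>

lemma unitarily_isomorphic_if_iso_factor:
  assumes f: "is_iso C f" and h: "is_iso C h"
    and h_endo: "Dom C h = Dom C f" "Cod C h = Dom C f"
    and factor: "Comp C (Dag C f) f = Comp C (Dag C h) h"
  shows "unitarily_isomorphic C (Dom C f) (Cod C f)"
proof -
  obtain k where k: "h \<in> Arr C" "k \<in> Arr C" "Dom C k = Cod C h" "Cod C k = Dom C h"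
    and k_inv: "Comp C k h = Idm C (Dom C h)" "Comp C h k = Idm C (Cod C h)"
    using h by (rule isoE)
  have f_arr: "f \<in> Arr C" using f by (rule isoE)
  define u where "u = Comp C f k"
  have u: "u \<in> Arr C" "Dom C u = Dom C f" "Cod C u = Cod C f"
    using f_arr k h_endo unfolding u_def by simp_all
  have "is_iso C k"
    unfolding is_iso_def using k k_inv by auto
  then have u_iso: "is_iso C u"
    unfolding u_def using iso_Comp f k h_endo by simp
  have "Comp C (Dag C u) u = Comp C (Comp C (Dag C k) (Dag C f)) (Comp C f k)"
    using f_arr k h_endo unfolding u_def by (simp add: Dag_Comp)
  also have "\<dots> = Comp C (Dag C k) (Comp C (Comp C (Dag C f) f) k)"
    using f_arr k h_endo by (simp add: Comp_assoc)
  also have "\<dots> = Comp C (Dag C k) (Comp C (Dag C h) (Comp C h k))"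
    using k h_endo unfolding factor by (simp add: Comp_assoc)
  also have "\<dots> = Comp C (Dag C k) (Dag C h)"
    using k k_inv h_endo by simp
  also have "\<dots> = Dag C (Comp C h k)"
    by (rule Dag_Comp[symmetric]) (use k h_endo in simp_all)
  also have "\<dots> = Idm C (Dom C u)"
    using f_arr k k_inv h_endo u by simp
  finally have "is_unitary C u"
    using u_iso unitaryI by blast
  then show ?thesis
    unfolding unitarily_isomorphic_def using u by blast
qed

lemma class_map_iso_class:
  assumes "X \<in> iso_classes C"
  shows "class_map C X = X"
proof -
  obtain a where "a \<in> Obj C" and X: "X = {b \<in> Obj C. isomorphic C a b}"
    using assms unfolding iso_classes_def quotient_def by auto
  show ?thesis
  proof (intro equalityI subsetI)
    fix c
    assume "c \<in> class_map C X"
    then obtain b where "c \<in> Obj C" "b \<in> X" "isomorphic C b c"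
      unfolding class_map_def by blast
    then show "c \<in> X"
      using X isomorphic_trans by blast
  next
    fix c
    assume "c \<in> X"
    then show "c \<in> class_map C X"
      unfolding class_map_def using X isomorphic_refl by blast
  qed
qed

lemma minimal_if_isomorphic_imp_unitarily_isomorphic:
  assumes "\<And>a b. isomorphic C a b \<Longrightarrow> unitarily_isomorphic C a b"
  shows "minimal C"
proof -
  have "unitarily_isomorphic C a b \<longleftrightarrow> isomorphic C a b" for a b
    using assms unitarily_isomorphic_imp_isomorphic by blast
  then have "unitary_classes C = iso_classes C"
    unfolding unitary_classes_def iso_classes_def by simp
  then show ?thesis
    unfolding minimal_def
    using bij_betw_cong[of "iso_classes C" "class_map C" id] class_map_iso_class by simp
qed

end

lemma functor_on_Arr: "functor_on C D Fo Fm \<Longrightarrow> f \<in> Arr C \<Longrightarrow> Fm f \<in> Arr D"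
  and functor_on_Dom: "functor_on C D Fo Fm \<Longrightarrow> f \<in> Arr C \<Longrightarrow> Dom D (Fm f) = Fo (Dom C f)"
  and functor_on_Cod: "functor_on C D Fo Fm \<Longrightarrow> f \<in> Arr C \<Longrightarrow> Cod D (Fm f) = Fo (Cod C f)"
  and functor_on_Idm: "functor_on C D Fo Fm \<Longrightarrow> a \<in> Obj C \<Longrightarrow> Fm (Idm C a) = Idm D (Fo a)"
  and functor_on_Comp: "functor_on C D Fo Fm \<Longrightarrow> f \<in> Arr C \<Longrightarrow> g \<in> Arr C \<Longrightarrow>
    Cod C f = Dom C g \<Longrightarrow> Fm (Comp C g f) = Comp D (Fm g) (Fm f)"
  unfolding functor_on_def by blast+

lemma functor_preserves_iso:
  assumes "is_category C" and F: "functor_on C D Fo Fm" and "is_iso C f"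
  shows "is_iso D (Fm f)"
proof -
  obtain g where fg: "f \<in> Arr C" "g \<in> Arr C" "Dom C g = Cod C f" "Cod C g = Dom C f"
    and g_inv: "Comp C g f = Idm C (Dom C f)" "Comp C f g = Idm C (Cod C f)"
    using assms(3) unfolding is_iso_def by blast
  have "Dom C f \<in> Obj C" "Cod C f \<in> Obj C"
    using assms(1) fg unfolding is_category_def by blast+
  then have "Comp D (Fm g) (Fm f) = Idm D (Fo (Dom C f))"
    "Comp D (Fm f) (Fm g) = Idm D (Fo (Cod C f))"
    using functor_on_Comp[OF F] functor_on_Idm[OF F] fg g_inv by metis+
  then show ?thesis
    unfolding is_iso_def using fg functor_on_Arr[OF F] functor_on_Dom[OF F] functor_on_Cod[OF F]
    by (auto intro!: bexI[of _ "Fm g"])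
qed

lemma Hilb_simps [simp]:
  "Arr Hilb = UNIV" "Dom Hilb = dim_col" "Cod Hilb = dim_row"
  "Idm Hilb = (\<lambda>n. 1\<^sub>m n)" "Comp Hilb = (\<lambda>g f. g * f)"
  by (simp_all add: Hilb_def)

lemma iso_Hilb_if_right_factor_of_iso:
  fixes A B :: "complex mat"
  assumes A: "A \<in> carrier_mat n n" and B: "B \<in> carrier_mat n n" and BA: "is_iso Hilb (B * A)"
  shows "is_iso Hilb A"
proof -
  obtain X where "dim_row X = dim_col (B * A)" "dim_col X = dim_row (B * A)"
    and X_BA: "X * (B * A) = 1\<^sub>m (dim_col (B * A))"
    using BA unfolding is_iso_def by auto
  then have X: "X \<in> carrier_mat n n" and "X * (B * A) = 1\<^sub>m n"
    using A B by auto
  then have left: "(X * B) * A = 1\<^sub>m n"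
    using A B by (simp add: assoc_mult_mat)
  have XB: "X * B \<in> carrier_mat n n"
    using B X by simp
  have right: "A * (X * B) = 1\<^sub>m n"
    by (rule mat_mult_left_right_inverse[OF XB A left])
  show ?thesis
    unfolding is_iso_def using A XB left right by auto
qed

text \<open>Finite dimensionality enters here: a conservative functor to \<open>Hilb\<close> reflects the
  fact that one-sided invertible square matrices are invertible.\<close>

lemma conservative_Hilb_endo_iso_if_Comp_iso:
  assumes "is_category C" and F: "functor_on C Hilb Fo Fm" "conservative C Hilb Fm"
    and g: "g \<in> Arr C" "Dom C g = a" "Cod C g = a"
    and h: "h \<in> Arr C" "Dom C h = a" "Cod C h = a"
    and gh: "is_iso C (Comp C g h)"
  shows "is_iso C h"
proof -
  have "Fm h \<in> carrier_mat (Fo a) (Fo a)" "Fm g \<in> carrier_mat (Fo a) (Fo a)"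
    using functor_on_Dom[OF F(1)] functor_on_Cod[OF F(1)] g h by auto
  moreover have "is_iso Hilb (Fm g * Fm h)"
    using functor_preserves_iso[OF assms(1) F(1) gh] functor_on_Comp[OF F(1)] g h by simp
  ultimately have "is_iso Hilb (Fm h)"
    by (rule iso_Hilb_if_right_factor_of_iso)
  then show ?thesis
    using F(2) h unfolding conservative_def by blast
qed

lemma (in dagger_category) isomorphic_imp_unitarily_isomorphic:
  assumes F: "functor_on C Hilb Fo Fm" "conservative C Hilb Fm"
    and end_positive: "\<forall>f\<in>Arr C. Dom C f = Cod C f \<longrightarrow> positive C f \<longrightarrow> end_positive C f"
    and "isomorphic C a b"
  shows "unitarily_isomorphic C a b"
proof -
  obtain f where f: "is_iso C f" "Dom C f = a" "Cod C f = b"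
    using assms(4) unfolding isomorphic_def by blast
  then have f_arr: "f \<in> Arr C" by (blast elim: isoE)
  let ?p = "Comp C (Dag C f) f"
  have p_endo: "?p \<in> Arr C" "Dom C ?p = a" "Cod C ?p = a"
    using f f_arr by simp_all
  have "positive C ?p"
    unfolding positive_def by (intro bexI[of _ f] conjI) (simp_all add: f_arr)
  then have "end_positive C ?p"
    using end_positive p_endo by simp
  then obtain h where h: "h \<in> Arr C" "Dom C h = a" "Cod C h = a" and p: "?p = Comp C (Dag C h) h"
    unfolding end_positive_def p_endo by blast
  have "is_category C"
    using is_dagger_category unfolding is_dagger_category_def by blast
  moreover have "is_iso C ?p"
    using f f_arr by (simp add: iso_Comp iso_Dag)
  ultimately have "is_iso C h"
    using conservative_Hilb_endo_iso_if_Comp_iso[OF _ F, of "Dag C h" a h] h p by simp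
  then show ?thesis
    using unitarily_isomorphic_if_iso_factor[OF f(1)] f h p by simp
qed

theorem mainTheorem4:
  fixes D :: "('o, 'm) dcat" and Fo :: "'o \<Rightarrow> nat" and Fm :: "'m \<Rightarrow> complex mat"
  assumes "is_dagger_category D"
    and "dagger_functor D Hilb Fo Fm"
    and "conservative D Hilb Fm"
    and "\<forall>f\<in>Arr D. Dom D f = Cod D f \<longrightarrow> positive D f \<longrightarrow> end_positive D f"
  shows "minimal D"
proof -
  interpret dagger_category D by (rule dagger_category.intro) (rule assms(1))
  have "functor_on D Hilb Fo Fm"
    using assms(2) unfolding dagger_functor_def by blast
  then show ?thesis
    using isomorphic_imp_unitarily_isomorphic assms(3,4)
    by (blast intro: minimal_if_isomorphic_imp_unitarily_isomorphic)
qed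

end
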